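(* Let $H$, $L$ be as in the context with $L\mid Z$, let $\omega_{LB}=\lceil\omega(H)/L\rceil$, and let $\mathcal T_0=\{x\in[MZ): x\equiv 0\pmod L\}$ (equivalently $\mathcal T_0=\bigcup_{m\in[M)}\{mZ+((rL)\bmod Z):r\in\mathbb Z\}$). Then $(1,\mathcal T_0)$ is an optimal solution with $\omega(H_{\mathcal T_0})=\omega_{LB}$ if and only if $|\{x\in\mathcal N(v_j): x\equiv 0\pmod L\}|\le\omega_{LB}$ for all $j\in[NZ)$, with equality for some $j$.
   Context: Notation: $[n)=\{0,1,\dots,n-1\}$. Let $M,N,Z$ be positive integers and let $H$ be a binary $MZ\times NZ$ matrix made of $M\times N$ blocks, each a $Z\times Z$ circulant; assume $H$ has no zero row and no two identical rows. For $j\in[NZ)$, $\mathcal N(v_j)=\{i\in[MZ): H[i][j]=1\}$ (the rows with a $1$ in column $j$). For $\mathcal A\subseteq[MZ)$, $H_{\mathcal A}$ is the submatrix of rows indexed by $\mathcal A$; $\omega(A)$ is the maximum Hamming weight of a column of $A$. For $i\in[MZ)$ and integer $s$, $\pi^s(i)=Z\lfloor i/Z\rfloor+((i+s)\bmod Z)$ and $\pi^s(\mathcal T)=\{\pi^s(x):x\in\mathcal T\}$. Fix an integer $L>1$. A pair $(S,\mathcal T_0)$ ($S$ a positive integer, $\mathcal T_0\subseteq[MZ)$) is a feasible solution if, with $\mathcal T_l=\pi^{lS}(\mathcal T_0)$ for $l\in[L)$, the sets $\mathcal T_0,\dots,\mathcal T_{L-1}$ are pairwise disjoint with union $[MZ)$.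 An optimal solution is a feasible solution minimizing $\omega(H_{\mathcal T_0})$ over all feasible solutions. *)

theory Defs
  imports Complex_Main
begin

text \<open>A binary MZ x NZ matrix is represented as H :: nat => nat => bool
  (H i j = True iff the entry in row i, column j is 1); only entries with
  i < M*Z and j < N*Z matter.\<close>

text \<open>H consists of M x N blocks, each a Z x Z circulant matrix:
  shifting both the row and column index cyclically by one inside a block
  does not change the entry.\<close>
definition block_circulant :: "nat \<Rightarrow> nat \<Rightarrow> nat \<Rightarrow> (nat \<Rightarrow> nat \<Rightarrow> bool) \<Rightarrow> bool" where
  "block_circulant M N Z H \<longleftrightarrow>
     (\<forall>m<M. \<forall>n<N. \<forall>a<Z. \<forall>b<Z.
        H (m*Z + (a+1) mod Z) (n*Z + (b+1) mod Z) = H (m*Z + a) (n*Z + b))"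

definition no_zero_row :: "nat \<Rightarrow> nat \<Rightarrow> (nat \<Rightarrow> nat \<Rightarrow> bool) \<Rightarrow> bool" where
  "no_zero_row nrows ncols H \<longleftrightarrow> (\<forall>i<nrows. \<exists>j<ncols. H i j)"

definition distinct_rows :: "nat \<Rightarrow> nat \<Rightarrow> (nat \<Rightarrow> nat \<Rightarrow> bool) \<Rightarrow> bool" where
  "distinct_rows nrows ncols H \<longleftrightarrow>
     (\<forall>i<nrows. \<forall>i'<nrows. i \<noteq> i' \<longrightarrow> (\<exists>j<ncols. H i j \<noteq> H i' j))"

definition nbhd :: "nat \<Rightarrow> (nat \<Rightarrow> nat \<Rightarrow> bool) \<Rightarrow> nat \<Rightarrow> nat set" where
  "nbhd nrows H j = {i. i < nrows \<and> H i j}"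

definition omega :: "nat \<Rightarrow> (nat \<Rightarrow> nat \<Rightarrow> bool) \<Rightarrow> nat set \<Rightarrow> nat" where
  "omega ncols H A = Max ((\<lambda>j. card {i \<in> A. H i j}) ` {..<ncols})"

definition piZ :: "nat \<Rightarrow> int \<Rightarrow> nat \<Rightarrow> nat" where
  "piZ Z s i = Z * (i div Z) + nat ((int i + s) mod int Z)"

definition feasible :: "nat \<Rightarrow> nat \<Rightarrow> nat \<Rightarrow> nat \<Rightarrow> nat set \<Rightarrow> bool" where
  "feasible M Z L S T0 \<longleftrightarrow> S > 0 \<and> T0 \<subseteq> {..<M*Z} \<and>
     (\<forall>l<L. \<forall>l'<L. l \<noteq> l' \<longrightarrow>
        piZ Z (int l * int S) ` T0 \<inter> piZ Z (int l' * int S) ` T0 = {}) \<and>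
     (\<Union>l<L. piZ Z (int l * int S) ` T0) = {..<M*Z}"

definition optimal :: "nat \<Rightarrow> nat \<Rightarrow> nat \<Rightarrow> nat \<Rightarrow> (nat \<Rightarrow> nat \<Rightarrow> bool) \<Rightarrow> nat \<Rightarrow> nat set \<Rightarrow> bool" where
  "optimal M N Z L H S T0 \<longleftrightarrow> feasible M Z L S T0 \<and>
     (\<forall>S' T0'. feasible M Z L S' T0' \<longrightarrow> omega (N*Z) H T0 \<le> omega (N*Z) H T0')"

end

theory Submission
  imports Defs
begin

text \<open>Any feasible pair (S, T) covers the rows of H by L disjoint shifts of T. Shifting rows and
  columns of a block-circulant matrix simultaneously preserves it, so each shift of T meets a column
  of H in at most omega(H_T) ones; hence omega(H) \<le> L omega(H_T), i.e. omega(H_T) \<ge> omega_LB for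
  every feasible pair. When L divides Z the shifts of T0 by l < L are exactly the residue classes
  l mod L, so (1, T0) is feasible. Consequently (1, T0) is optimal with value omega_LB iff
  omega(H_T0) = omega_LB, and omega(H_T0) is the largest of the column counts in the claim.\<close>

lemma omega_ge:
  assumes "j < ncols"
  shows "card {i \<in> A. H i j} \<le> omega ncols H A"
  unfolding omega_def using assms by (intro Max_ge) auto

lemma omega_attained:
  assumes "0 < ncols"
  obtains j where "j < ncols" "card {i \<in> A. H i j} = omega ncols H A"
proof -
  have "omega ncols H A \<in> (\<lambda>j. card {i \<in> A. H i j}) ` {..<ncols}"
    unfolding omega_def using assms by (intro Max_in) auto
  then show ?thesis using that by auto
qed

lemma omega_eq_iff:
  assumes "0 < ncols"
  shows "omega ncols H A = w \<longleftrightarrow>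
    (\<forall>j<ncols. card {i \<in> A. H i j} \<le> w) \<and> (\<exists>j<ncols. card {i \<in> A. H i j} = w)"
proof -
  have "(\<lambda>j. card {i \<in> A. H i j}) ` {..<ncols} \<noteq> {}" using assms by auto
  then show ?thesis unfolding omega_def by (subst Max_eq_iff) auto
qed

lemma piZ_mod_lt: "0 < Z \<Longrightarrow> nat ((int i + s) mod int Z) < Z"
  by (simp add: nat_less_iff)

lemma piZ_div: "0 < Z \<Longrightarrow> piZ Z s i div Z = i div Z"
  unfolding piZ_def using piZ_mod_lt[of Z i s] by simp

lemma piZ_less: "0 < Z \<Longrightarrow> i < K * Z \<Longrightarrow> piZ Z s i < K * Z"
  by (metis div_less_iff_less_mult piZ_div)

lemma piZ_0: "piZ Z 0 i = i"
  unfolding piZ_def by (simp flip: zmod_int)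

lemma piZ_piZ:
  assumes "0 < Z"
  shows "piZ Z t (piZ Z s i) = piZ Z (s + t) i"
proof -
  have "int (piZ Z s i) mod int Z = (int i + s) mod int Z"
    unfolding piZ_def using assms by (simp add: mod_add_left_eq)
  then have "(int (piZ Z s i) + t) mod int Z = (int i + (s + t)) mod int Z"
    by (metis add.assoc mod_add_left_eq)
  then show ?thesis unfolding piZ_def[of Z t] piZ_div[OF assms] by (simp add: piZ_def)
qed

lemma piZ_inverse: "0 < Z \<Longrightarrow> piZ Z (- s) (piZ Z s i) = i"
  by (simp add: piZ_piZ piZ_0)

lemma inj_piZ: "0 < Z \<Longrightarrow> inj (piZ Z s)"
  by (metis injI piZ_inverse)

lemma piZ_eq_block_rotation:
  assumes "0 < Z"
  shows "piZ Z s i = (i div Z) * Z + (i mod Z + nat (s mod int Z)) mod Z"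
proof -
  have "(int i + s) mod int Z = (int (i mod Z) + s mod int Z) mod int Z"
    by (metis mod_add_eq of_nat_mod)
  also have "\<dots> = int ((i mod Z + nat (s mod int Z)) mod Z)"
    using assms by (simp add: zmod_int)
  finally show ?thesis unfolding piZ_def by (simp add: mult.commute)
qed

lemma block_circulant_rotate:
  assumes "block_circulant M N Z H" "m < M" "n < N" "a < Z" "b < Z"
  shows "H (m*Z + (a + k) mod Z) (n*Z + (b + k) mod Z) = H (m*Z + a) (n*Z + b)"
proof (induction k)
  case (Suc k)
  have "H (m*Z + ((a + k) mod Z + 1) mod Z) (n*Z + ((b + k) mod Z + 1) mod Z) =
        H (m*Z + (a + k) mod Z) (n*Z + (b + k) mod Z)"
    using assms unfolding block_circulant_def by simp
  then show ?case using Suc.IH by (simp add: mod_Suc_eq)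
qed (use assms in simp)

lemma block_circulant_piZ:
  assumes "block_circulant M N Z H" "0 < Z" "i < M*Z" "j < N*Z"
  shows "H (piZ Z s i) (piZ Z s j) = H i j"
proof -
  have "i div Z < M" "j div Z < N"
    using assms(2-4) by (simp_all add: div_less_iff_less_mult)
  then show ?thesis
    using block_circulant_rotate[OF assms(1), of "i div Z" "j div Z" "i mod Z" "j mod Z"
        "nat (s mod int Z)"] assms(2)
    by (simp add: piZ_eq_block_rotation mult.commute)
qed

lemma column_weight_piZ_image:
  assumes "block_circulant M N Z H" "0 < Z" "T \<subseteq> {..<M*Z}" "j < N*Z"
  shows "card {i \<in> piZ Z s ` T. H i j} \<le> omega (N*Z) H T"
proof -
  have "{i \<in> piZ Z s ` T. H i j} = piZ Z s ` {i \<in> T. H i (piZ Z (- s) j)}"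
  proof -
    have "H (piZ Z s i) j = H i (piZ Z (- s) j)" if "i \<in> T" for i
      using block_circulant_piZ[OF assms(1,2), of "piZ Z s i" j "- s"] that assms
      by (auto simp: piZ_inverse piZ_less)
    then show ?thesis by auto
  qed
  then have "card {i \<in> piZ Z s ` T. H i j} = card {i \<in> T. H i (piZ Z (- s) j)}"
    using card_image[OF inj_on_subset[OF inj_piZ[OF assms(2)] subset_UNIV]] by simp
  also have "\<dots> \<le> omega (N*Z) H T"
    using assms(2,4) by (intro omega_ge piZ_less)
  finally show ?thesis .
qed

lemma feasible_omega_lower_bound:
  assumes "block_circulant M N Z H" "0 < Z" "0 < N" "feasible M Z L S T"
  shows "omega (N*Z) H {..<M*Z} \<le> L * omega (N*Z) H T"
proof -
  define f where "f l = piZ Z (int l * int S)" for l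
  have T: "T \<subseteq> {..<M*Z}"
    and disjoint: "\<forall>l<L. \<forall>l'<L. l \<noteq> l' \<longrightarrow> f l ` T \<inter> f l' ` T = {}"
    and cover: "(\<Union>l<L. f l ` T) = {..<M*Z}"
    using assms(4) unfolding feasible_def f_def by auto
  have "finite T" using T finite_subset by blast
  obtain j where j: "j < N*Z" "card {i \<in> {..<M*Z}. H i j} = omega (N*Z) H {..<M*Z}"
    using omega_attained[of "N*Z" "{..<M*Z}" H] assms(2,3) by auto
  have "{i \<in> {..<M*Z}. H i j} = (\<Union>l<L. {i \<in> f l ` T. H i j})"
    unfolding cover[symmetric] by blast
  then have "omega (N*Z) H {..<M*Z} = card (\<Union>l<L. {i \<in> f l ` T. H i j})"
    using j(2) by simp
  also have "\<dots> = (\<Sum>l<L. card {i \<in> f l ` T. H i j})"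
    using \<open>finite T\<close> disjoint by (intro card_UN_disjoint) auto
  also have "\<dots> \<le> (\<Sum>l<L. omega (N*Z) H T)"
    unfolding f_def using column_weight_piZ_image[OF assms(1,2) T j(1)] by (intro sum_mono)
  finally show ?thesis by simp
qed

lemma nat_ceiling_divide_le:
  assumes "0 < L" "W \<le> L * w"
  shows "nat \<lceil>real W / real L\<rceil> \<le> w"
proof -
  have "real W \<le> real L * real w" using assms(2) by (metis of_nat_le_iff of_nat_mult)
  then have "real W / real L \<le> real w" using assms(1) by (simp add: divide_le_eq mult.commute)
  then show ?thesis by (simp add: ceiling_le_iff nat_le_iff)
qed

lemma piZ_shift_multiple:
  assumes "L dvd Z" "0 < Z" "l < L" "L dvd x"
  shows "piZ Z (int l) x = x + l"
proof -
  obtain q where q: "Z = L * q" using assms(1) by auto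
  obtain k where k: "x mod Z = L * k"
    using assms(1,4) by (metis dvd_def dvd_mod)
  have "k < q" using k q assms(2) by (metis mod_less_divisor mult_less_cancel1)
  then have "L * k + L \<le> L * q" by (metis Suc_leI mult_Suc_right mult_le_mono2 add.commute)
  then have "x mod Z + l < Z" using k q assms(3) by linarith
  then have "nat ((int x + int l) mod int Z) = x mod Z + l"
    by (metis mod_add_left_eq mod_less nat_int of_nat_add zmod_int)
  then show ?thesis unfolding piZ_def by simp
qed

lemma piZ_image_residue_class:
  assumes "L dvd Z" "0 < Z" "l < L"
  shows "piZ Z (int l) ` {x. x < M*Z \<and> x mod L = 0} = {y. y < M*Z \<and> y mod L = l}"
proof (intro equalityI subsetI)
  fix y assume "y \<in> piZ Z (int l) ` {x. x < M*Z \<and> x mod L = 0}"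
  then obtain x where x: "x < M*Z" "x mod L = 0" "y = piZ Z (int l) x" by auto
  have "y < M*Z" using x piZ_less assms(2) by blast
  moreover have "y = x + l" using x piZ_shift_multiple[OF assms] by auto
  ultimately show "y \<in> {y. y < M*Z \<and> y mod L = l}"
    using x(2) assms(3) by (auto simp: mod_add_left_eq[symmetric])
next
  fix y assume "y \<in> {y. y < M*Z \<and> y mod L = l}"
  then have y: "y < M*Z" "y mod L = l" by auto
  have "L dvd y - l" using y(2) by (metis minus_mod_eq_mult_div dvd_triv_left)
  then have "piZ Z (int l) (y - l) = y"
    using piZ_shift_multiple[OF assms] y(2) by (metis le_add_diff_inverse2 mod_less_eq_dividend)
  moreover have "y - l \<in> {x. x < M*Z \<and> x mod L = 0}" using y \<open>L dvd y - l\<close> by auto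
  ultimately show "y \<in> piZ Z (int l) ` {x. x < M*Z \<and> x mod L = 0}" by force
qed

lemma feasible_residue_class_0:
  assumes "L dvd Z" "0 < Z" "0 < L"
  shows "feasible M Z L 1 {x. x < M*Z \<and> x mod L = 0}"
  unfolding feasible_def using piZ_image_residue_class[OF assms(1,2)] assms(3)
  by (auto 0 3 intro: mod_less_divisor)

theorem lemma3:
  fixes M N Z L :: nat and H :: "nat \<Rightarrow> nat \<Rightarrow> bool"
  assumes "M > 0" and "N > 0" and "Z > 0"
    and "block_circulant M N Z H"
    and "no_zero_row (M*Z) (N*Z) H"
    and "distinct_rows (M*Z) (N*Z) H"
    and "L > 1" and "L dvd Z"
  defines "wLB \<equiv> nat \<lceil>real (omega (N*Z) H {..<M*Z}) / real L\<rceil>"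
    and "T0 \<equiv> {x. x < M*Z \<and> x mod L = 0}"
  shows "(optimal M N Z L H 1 T0 \<and> omega (N*Z) H T0 = wLB) \<longleftrightarrow>
         ((\<forall>j<N*Z. card {x \<in> nbhd (M*Z) H j. x mod L = 0} \<le> wLB) \<and>
          (\<exists>j<N*Z. card {x \<in> nbhd (M*Z) H j. x mod L = 0} = wLB))"
proof -
  have feasible: "feasible M Z L 1 T0"
    unfolding T0_def using feasible_residue_class_0 assms(3,7,8) by simp
  have lower_bound: "wLB \<le> omega (N*Z) H T" if "feasible M Z L S T" for S T
    unfolding wLB_def using assms(2-4,7) that
    by (intro nat_ceiling_divide_le feasible_omega_lower_bound) auto
  have "optimal M N Z L H 1 T0 \<and> omega (N*Z) H T0 = wLB \<longleftrightarrow> omega (N*Z) H T0 = wLB"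
    using feasible lower_bound unfolding optimal_def by auto
  moreover have "{i \<in> T0. H i j} = {x \<in> nbhd (M*Z) H j. x mod L = 0}" for j
    by (auto simp: T0_def nbhd_def)
  ultimately show ?thesis
    using omega_eq_iff[of "N*Z" H T0 wLB] assms(2,3) by simp
qed

end
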